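(* Let $\Delta=\{|\zeta|\le1\}$, $\Gamma=\{|\zeta|=1\}$. Let $\varphi$ be a continuous complex-valued function on $\Delta\setminus\{0\}$ which is holomorphic on $\{0<|\zeta|<1\}$ and has either a pole or a removable singularity at $\zeta=0$. Let $\gamma=\{(\zeta,\varphi(\zeta)):\zeta\in\Gamma\}\subset\mathbb{C}^2$ and $\Sigma=\{(\zeta,\varphi(\zeta)):\zeta\in\Delta\setminus\{0\}\}\subset\mathbb{C}^2$. Then $\Sigma\subset\widehat{\gamma}$, where $\widehat\gamma$ is the projective hull of $\gamma$.
   Context: For a compact set $X\subset\mathbb{C}^n$, let $\mathcal{P}_d$ denote the space of complex polynomials on $\mathbb{C}^n$ of degree at most $d$. The projective hull $\widehat X$ of $X$ is the set of points $x\in\mathbb{C}^n$ for which there exists a constant $C_x$ such that $|P(x)|\le (C_x)^d\sup_X|P|$ for all $P\in\mathcal{P}_d$ and all $d\ge0$. *)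

theory Defs
  imports "HOL-Complex_Analysis.Complex_Analysis"
begin

definition polys2 :: "nat \<Rightarrow> (complex \<times> complex \<Rightarrow> complex) set" where
  "polys2 d = {P. \<exists>c :: nat \<Rightarrow> nat \<Rightarrow> complex.
      P = (\<lambda>(z, w). \<Sum>i\<le>d. \<Sum>j\<le>d - i. c i j * z ^ i * w ^ j)}"

definition proj_hull :: "(complex \<times> complex) set \<Rightarrow> (complex \<times> complex) set" where
  "proj_hull X = {x. \<exists>C :: real. \<forall>d. \<forall>P \<in> polys2 d.
      norm (P x) \<le> C ^ d * (SUP y\<in>X. norm (P y))}"

end

theory Submission
  imports Defs
begin

text \<open>If \<open>\<phi>\<close> has at worst a pole of order \<open>m\<close> at \<open>0\<close>, then \<open>h(\<zeta>) = \<zeta>\<^sup>m \<phi>(\<zeta>)\<close> extends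
  holomorphically to the open disc and continuously to the closed disc. For a polynomial
  \<open>P\<close> of degree at most \<open>d\<close>, multiplying each monomial \<open>\<zeta>\<^sup>i \<phi>\<^sup>j\<close> by \<open>\<zeta>\<^bsup>md\<^esup>\<close> turns it into
  \<open>\<zeta>\<^bsup>i + m(d-j)\<^esup> h\<^sup>j\<close>, so \<open>\<zeta>\<^bsup>md\<^esup> P(\<zeta>, \<phi>(\<zeta>))\<close> is holomorphic on the disc. By the maximum
  modulus principle its modulus at \<open>\<zeta>\<^sub>0\<close> is at most its maximum on the unit circle, where
  the factor \<open>\<zeta>\<^bsup>md\<^esup>\<close> has modulus one. Hence \<open>|P(\<zeta>\<^sub>0, \<phi>(\<zeta>\<^sub>0))| \<le> (|\<zeta>\<^sub>0|\<^sup>-\<^sup>m)\<^sup>d sup\<^sub>\<gamma> |P|\<close>.\<close>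

lemma not_essential_imp_power_mult_tendsto:
  fixes f :: "complex \<Rightarrow> complex"
  assumes holo: "f holomorphic_on S - {z}" and "open S" "z \<in> S"
    and "not_essential f z"
  obtains n c where "((\<lambda>w. (w - z) ^ n * f w) \<longlongrightarrow> c) (at z)"
proof (cases "is_pole f z")
  case True
  define g where "g = zor_poly f z"
  define n where "n = nat (- zorder f z)"
  obtain r where "r > 0" and g_holo: "g holomorphic_on cball z r"
    and f_eq: "\<And>w. w \<in> cball z r - {z} \<Longrightarrow> f w = g w / (w - z) ^ n"
    using zorder_exist_pole[OF holo \<open>open S\<close> \<open>z \<in> S\<close> True]
    unfolding g_def n_def by blast
  have "isCont g z"
    using g_holo \<open>r > 0\<close>
    by (intro continuous_on_interior[OF holomorphic_on_imp_continuous_on]) auto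
  moreover have "\<forall>\<^sub>F w in at z. g w = (w - z) ^ n * f w"
    unfolding eventually_at using \<open>r > 0\<close>
    by (intro exI[of _ r]) (auto simp: f_eq dist_commute)
  ultimately have "((\<lambda>w. (w - z) ^ n * f w) \<longlongrightarrow> g z) (at z)"
    by (simp add: isCont_def tendsto_cong)
  then show ?thesis by (rule that)
next
  case False
  then obtain c where "(f \<longlongrightarrow> c) (at z)"
    using \<open>not_essential f z\<close> by (auto simp: not_essential_def)
  then show ?thesis by (intro that[of 0]) simp
qed

lemma continuous_on_cball_removable_singularity:
  fixes f :: "complex \<Rightarrow> complex"
  assumes cont: "continuous_on (cball a r - {a}) f"
    and holo: "f holomorphic_on ball a r - {a}"
    and lim: "(f \<longlongrightarrow> c) (at a)"
  shows "continuous_on (cball a r) (\<lambda>w. if w = a then c else f w)"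
    (is "continuous_on _ ?g")
proof (cases "r > 0")
  case True
  have "continuous_on (ball a r) ?g"
    by (intro holomorphic_on_imp_continuous_on removable_singularity holo lim open_ball)
  moreover have "continuous_on (cball a r - {a}) ?g"
    using cont by (rule continuous_on_eq) simp
  moreover have "ball a r \<union> (cball a r - {a}) = cball a r"
    using True by auto
  moreover have "openin (top_of_set (cball a r)) (ball a r)"
    using True by (intro open_subset) auto
  moreover have "openin (top_of_set (cball a r)) (cball a r - {a})"
    using True by (intro openin_diff openin_subtopology_self) auto
  ultimately show ?thesis
    by (metis continuous_on_Un_local_open)
next
  case False
  have "cball a r \<subseteq> {a}"
  proof
    fix w assume "w \<in> cball a r"
    then have "dist a w \<le> 0"
      using False unfolding mem_cball by linarith
    then show "w \<in> {a}" by simp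
  qed
  then show ?thesis
    by (rule continuous_on_subset[OF continuous_on_sing])
qed

lemma norm_le_SUP_sphere_if_holomorphic:
  fixes f :: "complex \<Rightarrow> complex"
  assumes cont: "continuous_on (cball a r) f" and "f holomorphic_on ball a r"
    and "z \<in> cball a r"
  shows "norm (f z) \<le> (SUP w\<in>sphere a r. norm (f w))"
proof (rule maximum_modulus_frontier[of f "cball a r"])
  have "compact ((\<lambda>w. norm (f w)) ` sphere a r)"
    using cont by (intro compact_continuous_image continuous_on_norm)
      (auto intro: continuous_on_subset)
  then have "bdd_above ((\<lambda>w. norm (f w)) ` sphere a r)"
    by (simp add: bounded_imp_bdd_above compact_imp_bounded)
  then show "norm (f w) \<le> (SUP w\<in>sphere a r. norm (f w))" if "w \<in> frontier (cball a r)" for w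
    using that by (auto intro: cSUP_upper)
qed (use assms in auto)

lemma power_mult_monomials_eq:
  fixes z w :: "'a :: comm_semiring_1"
  shows "z ^ (m * d) * (\<Sum>i\<le>d. \<Sum>j\<le>d - i. c i j * z ^ i * w ^ j)
       = (\<Sum>i\<le>d. \<Sum>j\<le>d - i. c i j * z ^ (i + m * (d - j)) * (z ^ m * w) ^ j)"
proof -
  have "z ^ (m * d) * (c i j * z ^ i * w ^ j) = c i j * z ^ (i + m * (d - j)) * (z ^ m * w) ^ j"
    if "j \<le> d" for i j
  proof -
    have "m * d = m * (d - j) + m * j"
      using that by (simp flip: add_mult_distrib2)
    then have "z ^ (m * d) = z ^ (m * (d - j)) * (z ^ m) ^ j"
      by (simp only: power_add power_mult)
    then show ?thesis
      by (simp only: power_add power_mult_distrib mult_ac)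
  qed
  then show ?thesis
    by (auto simp: sum_distrib_left intro!: sum.cong)
qed

lemma norm_polys2_graph_le:
  fixes \<phi> h :: "complex \<Rightarrow> complex"
  assumes cont: "continuous_on (cball 0 1) h" and holo: "h holomorphic_on ball 0 1"
    and h_eq: "\<And>\<zeta>. \<zeta> \<in> cball 0 1 - {0} \<Longrightarrow> h \<zeta> = \<zeta> ^ m * \<phi> \<zeta>"
    and "P \<in> polys2 d" and \<zeta>\<^sub>0: "\<zeta>\<^sub>0 \<in> cball 0 1 - {0}"
  shows "norm \<zeta>\<^sub>0 ^ (m * d) * norm (P (\<zeta>\<^sub>0, \<phi> \<zeta>\<^sub>0))
           \<le> (SUP y\<in>(\<lambda>\<zeta>. (\<zeta>, \<phi> \<zeta>)) ` sphere 0 1. norm (P y))"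
proof -
  obtain c where P: "P = (\<lambda>(z, w). \<Sum>i\<le>d. \<Sum>j\<le>d - i. c i j * z ^ i * w ^ j)"
    using \<open>P \<in> polys2 d\<close> unfolding polys2_def by blast
  define G where "G = (\<lambda>\<zeta>. \<Sum>i\<le>d. \<Sum>j\<le>d - i. c i j * \<zeta> ^ (i + m * (d - j)) * h \<zeta> ^ j)"
  have G_eq: "G \<zeta> = \<zeta> ^ (m * d) * P (\<zeta>, \<phi> \<zeta>)" if "\<zeta> \<in> cball 0 1 - {0}" for \<zeta>
    using that by (simp add: G_def P h_eq power_mult_monomials_eq)
  have "continuous_on (cball 0 1) G"
    unfolding G_def by (intro continuous_intros cont)
  moreover have "G holomorphic_on ball 0 1"
    unfolding G_def by (intro holomorphic_intros holo)
  ultimately have "norm (G \<zeta>\<^sub>0) \<le> (SUP \<zeta>\<in>sphere 0 1. norm (G \<zeta>))"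
    using \<zeta>\<^sub>0 by (intro norm_le_SUP_sphere_if_holomorphic) auto
  also have "\<dots> = (SUP y\<in>(\<lambda>\<zeta>. (\<zeta>, \<phi> \<zeta>)) ` sphere 0 1. norm (P y))"
  proof -
    have "norm (G \<zeta>) = norm (P (\<zeta>, \<phi> \<zeta>))" if "\<zeta> \<in> sphere 0 1" for \<zeta>
    proof -
      have "\<zeta> \<in> cball 0 1 - {0}"
        using that by auto
      then show ?thesis
        using that by (simp add: G_eq norm_mult norm_power)
    qed
    then show ?thesis
      unfolding image_image by (rule SUP_cong[OF refl])
  qed
  finally show ?thesis
    using \<zeta>\<^sub>0 by (simp add: G_eq norm_mult norm_power)
qed

lemma proj_hullI:
  assumes "r > 0"
    and "\<And>d P. P \<in> polys2 d \<Longrightarrow> r ^ d * norm (P x) \<le> (SUP y\<in>X. norm (P y))"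
  shows "x \<in> proj_hull X"
  unfolding proj_hull_def
proof (intro CollectI exI[of _ "1 / r"] allI ballI)
  fix d P assume "P \<in> polys2 d"
  then show "norm (P x) \<le> (1 / r) ^ d * (SUP y\<in>X. norm (P y))"
    using assms by (simp add: power_one_over field_simps)
qed

lemma graph_subset_proj_hull_if_power_mult_extends:
  fixes \<phi> h :: "complex \<Rightarrow> complex"
  assumes "continuous_on (cball 0 1) h" and "h holomorphic_on ball 0 1"
    and "\<And>\<zeta>. \<zeta> \<in> cball 0 1 - {0} \<Longrightarrow> h \<zeta> = \<zeta> ^ m * \<phi> \<zeta>"
  shows "(\<lambda>\<zeta>. (\<zeta>, \<phi> \<zeta>)) ` (cball 0 1 - {0}) \<subseteq> proj_hull ((\<lambda>\<zeta>. (\<zeta>, \<phi> \<zeta>)) ` sphere 0 1)"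
proof
  fix x assume "x \<in> (\<lambda>\<zeta>. (\<zeta>, \<phi> \<zeta>)) ` (cball 0 1 - {0})"
  then obtain \<zeta> where \<zeta>: "\<zeta> \<in> cball 0 1 - {0}" and "x = (\<zeta>, \<phi> \<zeta>)"
    by blast
  then show "x \<in> proj_hull ((\<lambda>\<zeta>. (\<zeta>, \<phi> \<zeta>)) ` sphere 0 1)"
    using norm_polys2_graph_le[OF assms _ \<zeta>]
    by (intro proj_hullI[of "norm \<zeta> ^ m"]) (auto simp: power_mult)
qed

theorem proposition3:
  fixes \<phi> :: "complex \<Rightarrow> complex"
  assumes "continuous_on (cball 0 1 - {0}) \<phi>"
    and "\<phi> holomorphic_on (ball 0 1 - {0})"
    and "is_pole \<phi> 0 \<or> (\<exists>l. (\<phi> \<longlongrightarrow> l) (at 0))"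
  shows "(\<lambda>\<zeta>. (\<zeta>, \<phi> \<zeta>)) ` (cball 0 1 - {0})
           \<subseteq> proj_hull ((\<lambda>\<zeta>. (\<zeta>, \<phi> \<zeta>)) ` sphere 0 1)"
proof -
  obtain m L where lim: "((\<lambda>\<zeta>. \<zeta> ^ m * \<phi> \<zeta>) \<longlongrightarrow> L) (at 0)"
    using not_essential_imp_power_mult_tendsto[where z = 0, OF assms(2) open_ball] assms(3)
    by (auto simp: not_essential_def)
  define h where "h = (\<lambda>\<zeta>. if \<zeta> = 0 then L else \<zeta> ^ m * \<phi> \<zeta>)"
  have h_cont: "continuous_on (cball 0 1) h"
    unfolding h_def using assms(1,2) lim
    by (intro continuous_on_cball_removable_singularity continuous_intros holomorphic_intros)
  have h_holo: "h holomorphic_on ball 0 1"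
    unfolding h_def using assms(2) lim
    by (intro removable_singularity holomorphic_intros) auto
  show ?thesis
    by (rule graph_subset_proj_hull_if_power_mult_extends[where m = m, OF h_cont h_holo])
      (simp add: h_def)
qed

end
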